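(* Let $\mathsf{Ax}\subseteq\{\mathsf{C}_\Diamond,\mathsf{I}_{\Diamond\Box}\}$. Then $\mathsf{CK}\oplus\mathsf{N}_{\Diamond\Box}\oplus\mathsf{Ax}$ is sound and strongly complete with respect to the class of $\mathsf{CK}$-frames satisfying ($\mathsf{N}_{\Diamond\Box}$-corr) and ($\mathsf{A}$-suff) for each $\mathsf{A}\in\mathsf{Ax}$. Moreover, if $\mathsf{I}_{\Diamond\Box}\in\mathsf{Ax}$, it is also sound and strongly complete with respect to the class of $\mathsf{CK}$-frames satisfying ($\mathsf{N}_{\Diamond\Box}$-suff) and ($\mathsf{A}$-suff) for each $\mathsf{A}\in\mathsf{Ax}$. (Sound and strongly complete w.r.t. $\mathcal{F}$ means $\Gamma\vdash\varphi$ iff $\Gamma\Vdash_{\mathcal{F}}\varphi$ for all $\Gamma\subseteq\mathbf{L}$, $\varphi\in\mathbf{L}$.)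
   Context: Formulas: $\mathbf{L}$ is generated from a countably infinite set of propositional variables by $\varphi ::= p \mid \bot \mid \varphi\wedge\varphi \mid \varphi\vee\varphi \mid \varphi\to\varphi \mid \Box\varphi \mid \Diamond\varphi$. Axioms: $\mathsf{K}_\Box$: $\Box(\varphi\to\psi)\to(\Box\varphi\to\Box\psi)$; $\mathsf{K}_\Diamond$: $\Box(\varphi\to\psi)\to(\Diamond\varphi\to\Diamond\psi)$; $\mathsf{N}_{\Diamond\Box}$: $\Diamond\bot\to\Box\bot$; $\mathsf{C}_\Diamond$: $\Diamond(\varphi\vee\psi)\to\Diamond\varphi\vee\Diamond\psi$; $\mathsf{I}_{\Diamond\Box}$: $(\Diamond\varphi\to\Box\psi)\to\Box(\varphi\to\psi)$. For a set $\mathsf{Ax}$ of axioms, $\mathsf{CK}\oplus\mathsf{Ax}$ is the relation $\Gamma\vdash_{\mathsf{Ax}}\varphi$ inductively generated by: (Ax) $\Gamma\vdash\varphi$ whenever $\varphi$ is a substitution instance of an axiom of a standard Hilbert axiomatisation of intuitionistic propositional logic, of $\mathsf{K}_\Box$, of $\mathsf{K}_\Diamond$, or of an element of $\mathsf{Ax}$; (El) $\Gamma\vdash\varphi$ if $\varphi\in\Gamma$; (MP) from $\Gamma\vdash\varphi$ and $\Gamma\vdash\varphi\to\psi$ infer $\Gamma\vdash\psi$; (Nec) from $\emptyset\vdash\varphi$ infer $\Gamma\vdash\Box\varphi$. A $\mathsf{CK}$-frame is a tuple $(X,e,\le,R)$ where $(X,\le)$ is a preorder, $e\in X$ is a maximal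 element of $(X,\le)$, and $R$ is a binary relation on $X$ with $eRx$ iff $x=e$. A valuation assigns to each variable $p$ an upset $V(p)$ with $e\in V(p)$. Forcing: $x\Vdash p$ iff $x\in V(p)$; $x\Vdash\bot$ iff $x=e$; $\wedge,\vee$ pointwise; $x\Vdash\varphi\to\psi$ iff for all $y\ge x$, $y\Vdash\varphi$ implies $y\Vdash\psi$; $x\Vdash\Box\varphi$ iff for all $y,z$ with $x\le y$ and $yRz$, $z\Vdash\varphi$; $x\Vdash\Diamond\varphi$ iff for all $y\ge x$ there is $z$ with $yRz$ and $z\Vdash\varphi$. For a class $\mathcal{F}$ of frames, $\Gamma\Vdash_{\mathcal{F}}\varphi$ means: for every frame in $\mathcal{F}$, every valuation and every world $x$, if $x$ forces all of $\Gamma$ then $x\Vdash\varphi$. Frame conditions: ($\mathsf{N}_{\Diamond\Box}$-suff) for all $x,y$, if $xRe$ and $xRy$ then $y=e$. ($\mathsf{N}_{\Diamond\Box}$-corr) for all $x$, if $yRe$ for every $y\ge x$, then for all $y,z$ with $x\le y$ and $yRz$, $z=e$. ($\mathsf{C}_\Diamond$-suff) for all $x$ there is $x'\ge x$ such that for all $y,z$, if $x\le y$ and $x'Rz$ then there is $w$ with $yRw$ and $z\le w$. ($\mathsf{I}_{\Diamond\Box}$-suff) for all $x,y,z$ with $xRy$ and $y\le z$ there is $u$ with $x\le u$ and $uRz$ such that for every $s\ge u$ there is $t$ with $sRt$ and $z\le t$. *)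

theory Defs
  imports Main
begin

datatype fm =
    Var nat
  | Bot
  | And fm fm
  | Or fm fm
  | Imp fm fm
  | Box fm
  | Dia fm

datatype ax = NDB | CD | IDB

inductive ipc_axiom :: "fm \<Rightarrow> bool" where
  A1: "ipc_axiom (Imp p (Imp q p))"
| A2: "ipc_axiom (Imp (Imp p (Imp q r)) (Imp (Imp p q) (Imp p r)))"
| A3: "ipc_axiom (Imp (And p q) p)"
| A4: "ipc_axiom (Imp (And p q) q)"
| A5: "ipc_axiom (Imp p (Imp q (And p q)))"
| A6: "ipc_axiom (Imp p (Or p q))"
| A7: "ipc_axiom (Imp q (Or p q))"
| A8: "ipc_axiom (Imp (Imp p r) (Imp (Imp q r) (Imp (Or p q) r)))"
| A9: "ipc_axiom (Imp Bot p)"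

fun ax_instance :: "ax \<Rightarrow> fm \<Rightarrow> bool" where
  "ax_instance NDB \<phi> = (\<phi> = Imp (Dia Bot) (Box Bot))"
| "ax_instance CD \<phi> = (\<exists>p q. \<phi> = Imp (Dia (Or p q)) (Or (Dia p) (Dia q)))"
| "ax_instance IDB \<phi> = (\<exists>p q. \<phi> = Imp (Imp (Dia p) (Box q)) (Box (Imp p q)))"

inductive deriv :: "ax set \<Rightarrow> fm set \<Rightarrow> fm \<Rightarrow> bool" where
  ipc: "ipc_axiom \<phi> \<Longrightarrow> deriv Ax \<Gamma> \<phi>"
| KBox: "deriv Ax \<Gamma> (Imp (Box (Imp p q)) (Imp (Box p) (Box q)))"
| KDia: "deriv Ax \<Gamma> (Imp (Box (Imp p q)) (Imp (Dia p) (Dia q)))"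
| extra: "A \<in> Ax \<Longrightarrow> ax_instance A \<phi> \<Longrightarrow> deriv Ax \<Gamma> \<phi>"
| El: "\<phi> \<in> \<Gamma> \<Longrightarrow> deriv Ax \<Gamma> \<phi>"
| MP: "deriv Ax \<Gamma> \<phi> \<Longrightarrow> deriv Ax \<Gamma> (Imp \<phi> \<psi>) \<Longrightarrow> deriv Ax \<Gamma> \<psi>"
| Nec: "deriv Ax {} \<phi> \<Longrightarrow> deriv Ax \<Gamma> (Box \<phi>)"

definition ck_frame :: "'w set \<Rightarrow> 'w \<Rightarrow> ('w \<Rightarrow> 'w \<Rightarrow> bool) \<Rightarrow> ('w \<Rightarrow> 'w \<Rightarrow> bool) \<Rightarrow> bool" where
  "ck_frame X e le R \<longleftrightarrow>
     (\<forall>x y. le x y \<longrightarrow> x \<in> X \<and> y \<in> X) \<and>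
     (\<forall>x y. R x y \<longrightarrow> x \<in> X \<and> y \<in> X) \<and>
     (\<forall>x\<in>X. le x x) \<and>
     (\<forall>x y z. le x y \<longrightarrow> le y z \<longrightarrow> le x z) \<and>
     e \<in> X \<and>
     (\<forall>x\<in>X. le e x \<longrightarrow> x = e) \<and>
     (\<forall>x\<in>X. R e x \<longleftrightarrow> x = e)"

definition valuation :: "'w set \<Rightarrow> 'w \<Rightarrow> ('w \<Rightarrow> 'w \<Rightarrow> bool) \<Rightarrow> (nat \<Rightarrow> 'w set) \<Rightarrow> bool" where
  "valuation X e le V \<longleftrightarrow>
     (\<forall>p. V p \<subseteq> X \<and> e \<in> V p \<and> (\<forall>x y. x \<in> V p \<longrightarrow> le x y \<longrightarrow> y \<in> V p))"

fun forces :: "'w set \<Rightarrow> 'w \<Rightarrow> ('w \<Rightarrow> 'w \<Rightarrow> bool) \<Rightarrow> ('w \<Rightarrow> 'w \<Rightarrow> bool)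
               \<Rightarrow> (nat \<Rightarrow> 'w set) \<Rightarrow> 'w \<Rightarrow> fm \<Rightarrow> bool" where
  "forces X e le R V x (Var p) = (x \<in> V p)"
| "forces X e le R V x Bot = (x = e)"
| "forces X e le R V x (And \<phi> \<psi>) = (forces X e le R V x \<phi> \<and> forces X e le R V x \<psi>)"
| "forces X e le R V x (Or \<phi> \<psi>) = (forces X e le R V x \<phi> \<or> forces X e le R V x \<psi>)"
| "forces X e le R V x (Imp \<phi> \<psi>) =
     (\<forall>y\<in>X. le x y \<longrightarrow> forces X e le R V y \<phi> \<longrightarrow> forces X e le R V y \<psi>)"
| "forces X e le R V x (Box \<phi>) =
     (\<forall>y\<in>X. \<forall>z\<in>X. le x y \<longrightarrow> R y z \<longrightarrow> forces X e le R V z \<phi>)"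
| "forces X e le R V x (Dia \<phi>) =
     (\<forall>y\<in>X. le x y \<longrightarrow> (\<exists>z\<in>X. R y z \<and> forces X e le R V z \<phi>))"

definition N_suff :: "'w set \<Rightarrow> 'w \<Rightarrow> ('w \<Rightarrow> 'w \<Rightarrow> bool) \<Rightarrow> ('w \<Rightarrow> 'w \<Rightarrow> bool) \<Rightarrow> bool" where
  "N_suff X e le R \<longleftrightarrow> (\<forall>x\<in>X. \<forall>y\<in>X. R x e \<and> R x y \<longrightarrow> y = e)"

definition N_corr :: "'w set \<Rightarrow> 'w \<Rightarrow> ('w \<Rightarrow> 'w \<Rightarrow> bool) \<Rightarrow> ('w \<Rightarrow> 'w \<Rightarrow> bool) \<Rightarrow> bool" where
  "N_corr X e le R \<longleftrightarrow>
     (\<forall>x\<in>X. (\<forall>y\<in>X. le x y \<longrightarrow> R y e) \<longrightarrow>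
              (\<forall>y\<in>X. \<forall>z\<in>X. le x y \<and> R y z \<longrightarrow> z = e))"

definition C_suff :: "'w set \<Rightarrow> 'w \<Rightarrow> ('w \<Rightarrow> 'w \<Rightarrow> bool) \<Rightarrow> ('w \<Rightarrow> 'w \<Rightarrow> bool) \<Rightarrow> bool" where
  "C_suff X e le R \<longleftrightarrow>
     (\<forall>x\<in>X. \<exists>x'\<in>X. le x x' \<and>
        (\<forall>y\<in>X. \<forall>z\<in>X. le x y \<and> R x' z \<longrightarrow> (\<exists>w\<in>X. R y w \<and> le z w)))"

definition I_suff :: "'w set \<Rightarrow> 'w \<Rightarrow> ('w \<Rightarrow> 'w \<Rightarrow> bool) \<Rightarrow> ('w \<Rightarrow> 'w \<Rightarrow> bool) \<Rightarrow> bool" where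
  "I_suff X e le R \<longleftrightarrow>
     (\<forall>x\<in>X. \<forall>y\<in>X. \<forall>z\<in>X. R x y \<and> le y z \<longrightarrow>
        (\<exists>u\<in>X. le x u \<and> R u z \<and> (\<forall>s\<in>X. le u s \<longrightarrow> (\<exists>t\<in>X. R s t \<and> le z t))))"

datatype ncond = Ncorr | Nsuff

definition in_class :: "ncond \<Rightarrow> ax set \<Rightarrow> 'w set \<Rightarrow> 'w \<Rightarrow> ('w \<Rightarrow> 'w \<Rightarrow> bool) \<Rightarrow> ('w \<Rightarrow> 'w \<Rightarrow> bool) \<Rightarrow> bool" where
  "in_class nc Ax X e le R \<longleftrightarrow>
     ck_frame X e le R \<and>
     (case nc of Ncorr \<Rightarrow> N_corr X e le R | Nsuff \<Rightarrow> N_suff X e le R) \<and>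
     (CD \<in> Ax \<longrightarrow> C_suff X e le R) \<and>
     (IDB \<in> Ax \<longrightarrow> I_suff X e le R)"

definition conseq :: "'w itself \<Rightarrow> ncond \<Rightarrow> ax set \<Rightarrow> fm set \<Rightarrow> fm \<Rightarrow> bool" where
  "conseq _ nc Ax \<Gamma> \<phi> \<longleftrightarrow>
     (\<forall>(X::'w set) e le R V. in_class nc Ax X e le R \<longrightarrow> valuation X e le V \<longrightarrow>
        (\<forall>x\<in>X. (\<forall>\<psi>\<in>\<Gamma>. forces X e le R V x \<psi>) \<longrightarrow> forces X e le R V x \<phi>))"

text \<open>Soundness (for frames over an arbitrary type 'w) and strong completeness
  (countermodels can be found among frames whose worlds are sets of formulas).\<close>
definition sound_strongly_complete :: "'w itself \<Rightarrow> ax set \<Rightarrow> ncond \<Rightarrow> ax set \<Rightarrow> bool" where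
  "sound_strongly_complete T L nc Ax \<longleftrightarrow>
     (\<forall>\<Gamma> \<phi>. deriv L \<Gamma> \<phi> \<longrightarrow> conseq T nc Ax \<Gamma> \<phi>) \<and>
     (\<forall>\<Gamma> \<phi>. conseq TYPE(fm set) nc Ax \<Gamma> \<phi> \<longrightarrow> deriv L \<Gamma> \<phi>)"

end

theory Submission
  imports Defs
begin

text \<open>Soundness: each frame condition validates its axiom, and persistence does the rest.
  Completeness: a world of the canonical model is a prime theory \<open>\<Gamma>\<close> paired with a set \<open>A\<close>
  of formulas its successors must omit; \<open>\<le>\<close> is inclusion of theories, the successors of
  \<open>(\<Gamma>, A)\<close> are the prime theories containing \<open>{\<phi>. \<box>\<phi> \<in> \<Gamma>}\<close> and disjoint from \<open>A\<close>, and the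
  inconsistent theory is the exploding world \<open>e\<close>. All theories needed come from a single
  Lindenbaum lemma omitting an implication-directed set of formulas. Since countermodels must
  live on \<open>fm set\<close>, the canonical model is finally moved there along an injection.\<close>

lemma deriv_mono: "deriv L \<Gamma> \<phi> \<Longrightarrow> \<Gamma> \<subseteq> \<Delta> \<Longrightarrow> deriv L \<Delta> \<phi>"
  by (induction arbitrary: \<Delta> rule: deriv.induct) (auto intro: deriv.intros)

lemma deriv_theorem: "deriv L {} \<phi> \<Longrightarrow> deriv L \<Gamma> \<phi>"
  by (erule deriv_mono) simp

lemma ax_K: "deriv L \<Gamma> (Imp p (Imp q p))"
  by (intro deriv.ipc ipc_axiom.intros)
lemma ax_S: "deriv L \<Gamma> (Imp (Imp p (Imp q r)) (Imp (Imp p q) (Imp p r)))"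
  by (intro deriv.ipc ipc_axiom.intros)
lemma ax_conjunct1: "deriv L \<Gamma> (Imp (And p q) p)"
  by (intro deriv.ipc ipc_axiom.intros)
lemma ax_conjunct2: "deriv L \<Gamma> (Imp (And p q) q)"
  by (intro deriv.ipc ipc_axiom.intros)
lemma ax_conjI: "deriv L \<Gamma> (Imp p (Imp q (And p q)))"
  by (intro deriv.ipc ipc_axiom.intros)
lemma ax_disjI1: "deriv L \<Gamma> (Imp p (Or p q))"
  by (intro deriv.ipc ipc_axiom.intros)
lemma ax_disjI2: "deriv L \<Gamma> (Imp q (Or p q))"
  by (intro deriv.ipc ipc_axiom.intros)
lemma ax_disjE: "deriv L \<Gamma> (Imp (Imp p r) (Imp (Imp q r) (Imp (Or p q) r)))"
  by (intro deriv.ipc ipc_axiom.intros)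
lemma ax_botE: "deriv L \<Gamma> (Imp Bot p)"
  by (intro deriv.ipc ipc_axiom.intros)

lemma deriv_mp: "deriv L \<Gamma> (Imp \<phi> \<psi>) \<Longrightarrow> deriv L \<Gamma> \<phi> \<Longrightarrow> deriv L \<Gamma> \<psi>"
  by (rule deriv.MP)

lemma deriv_imp_weaken: "deriv L \<Gamma> \<psi> \<Longrightarrow> deriv L \<Gamma> (Imp \<phi> \<psi>)"
  by (rule deriv_mp[OF ax_K])

lemma deriv_imp_refl: "deriv L \<Gamma> (Imp \<phi> \<phi>)"
  by (rule deriv_mp[OF deriv_mp[OF ax_S ax_K] ax_K[where q = \<phi>]])

lemma deduction: "deriv L (insert \<phi> \<Gamma>) \<psi> \<Longrightarrow> deriv L \<Gamma> (Imp \<phi> \<psi>)"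
proof (induction L "insert \<phi> \<Gamma>" \<psi> arbitrary: \<Gamma> rule: deriv.induct)
  case (El \<psi>)
  then show ?case
    by (cases "\<psi> = \<phi>") (auto intro: deriv_imp_refl deriv_imp_weaken deriv.El)
next
  case (MP \<psi> \<chi>)
  then show ?case by (blast intro: deriv_mp[OF deriv_mp[OF ax_S]])
qed (auto intro: deriv_imp_weaken deriv.intros)

lemma deduction_iff: "deriv L \<Gamma> (Imp \<phi> \<psi>) \<longleftrightarrow> deriv L (insert \<phi> \<Gamma>) \<psi>"
  by (meson deduction deriv.El deriv_mono insertI1 deriv_mp subset_insertI)

lemma deriv_cut: "deriv L \<Gamma> \<phi> \<Longrightarrow> deriv L (insert \<phi> \<Gamma>) \<psi> \<Longrightarrow> deriv L \<Gamma> \<psi>"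
  by (rule deriv_mp[OF deduction])

lemma deriv_disjE:
  "deriv L \<Gamma> (Or \<phi> \<psi>) \<Longrightarrow> deriv L (insert \<phi> \<Gamma>) \<chi> \<Longrightarrow> deriv L (insert \<psi> \<Gamma>) \<chi> \<Longrightarrow> deriv L \<Gamma> \<chi>"
  by (rule deriv_mp[OF deriv_mp[OF deriv_mp[OF ax_disjE deduction] deduction]])

lemma deriv_in_MP_closed:
  assumes "deriv L \<Gamma> \<phi>" "\<Gamma> \<subseteq> E"
    and theorems: "\<And>\<psi>. deriv L {} \<psi> \<Longrightarrow> \<psi> \<in> E"
    and MP_closed: "\<And>\<psi> \<chi>. \<psi> \<in> E \<Longrightarrow> Imp \<psi> \<chi> \<in> E \<Longrightarrow> \<chi> \<in> E"
  shows "\<phi> \<in> E"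
proof -
  have "\<phi> \<in> E" if "deriv L' \<Gamma> \<phi>" "L' = L" "\<Gamma> \<subseteq> E" for L' \<Gamma> \<phi>
    using that by induction (auto intro: theorems MP_closed deriv.intros)
  then show ?thesis using assms(1,2) by blast
qed

lemma deriv_trans: "deriv L \<Gamma> \<phi> \<Longrightarrow> (\<And>\<psi>. \<psi> \<in> \<Gamma> \<Longrightarrow> deriv L \<Delta> \<psi>) \<Longrightarrow> deriv L \<Delta> \<phi>"
  using deriv_in_MP_closed[of L \<Gamma> \<phi> "{\<phi>. deriv L \<Delta> \<phi>}"] by (auto intro: deriv_mp deriv_theorem)

lemma deriv_finite_subset: "deriv L \<Gamma> \<phi> \<Longrightarrow> \<exists>\<Gamma>0\<subseteq>\<Gamma>. finite \<Gamma>0 \<and> deriv L \<Gamma>0 \<phi>"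
proof (induction rule: deriv.induct)
  case (El \<phi> \<Gamma> L)
  then show ?case by (intro exI[of _ "{\<phi>}"]) (auto intro: deriv.El)
next
  case (MP L \<Gamma> \<phi> \<psi>)
  then obtain \<Gamma>1 \<Gamma>2 where "\<Gamma>1 \<subseteq> \<Gamma>" "finite \<Gamma>1" "deriv L \<Gamma>1 \<phi>"
    and "\<Gamma>2 \<subseteq> \<Gamma>" "finite \<Gamma>2" "deriv L \<Gamma>2 (Imp \<phi> \<psi>)" by blast
  then show ?case
    by (intro exI[of _ "\<Gamma>1 \<union> \<Gamma>2"]) (auto intro: deriv_mp deriv_mono)
qed (auto intro: deriv.intros)

lemma deriv_box_mono: "deriv L {} (Imp \<phi> \<psi>) \<Longrightarrow> deriv L \<Gamma> (Imp (Box \<phi>) (Box \<psi>))"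
  by (rule deriv_mp[OF deriv.KBox deriv.Nec])

lemma deriv_dia_mono: "deriv L {} (Imp \<phi> \<psi>) \<Longrightarrow> deriv L \<Gamma> (Imp (Dia \<phi>) (Dia \<psi>))"
  by (rule deriv_mp[OF deriv.KDia deriv.Nec])

lemma deriv_imp_trans: "deriv L \<Gamma> (Imp \<phi> \<psi>) \<Longrightarrow> deriv L \<Gamma> (Imp \<psi> \<chi>) \<Longrightarrow> deriv L \<Gamma> (Imp \<phi> \<chi>)"
  by (meson deduction_iff deriv_mono deriv_mp subset_insertI)

lemma deriv_imp_And_left: "deriv L \<Gamma> (Imp (Imp \<phi> \<chi>) (Imp (And \<phi> \<psi>) \<chi>))"
  by (intro deduction deriv_imp_trans[OF ax_conjunct1] deriv.El) simp

lemma deriv_imp_And_right: "deriv L \<Gamma> (Imp (Imp \<psi> \<chi>) (Imp (And \<phi> \<psi>) \<chi>))"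
  by (intro deduction deriv_imp_trans[OF ax_conjunct2] deriv.El) simp

section \<open>Theories and the Lindenbaum lemma\<close>

definition is_theory :: "ax set \<Rightarrow> fm set \<Rightarrow> bool" where
  "is_theory L \<Gamma> \<longleftrightarrow> (\<forall>\<phi>. deriv L \<Gamma> \<phi> \<longrightarrow> \<phi> \<in> \<Gamma>)"

definition prime_theory :: "ax set \<Rightarrow> fm set \<Rightarrow> bool" where
  "prime_theory L \<Gamma> \<longleftrightarrow> is_theory L \<Gamma> \<and> (\<forall>\<phi> \<psi>. Or \<phi> \<psi> \<in> \<Gamma> \<longrightarrow> \<phi> \<in> \<Gamma> \<or> \<psi> \<in> \<Gamma>)"

lemma prime_theory_is_theory: "prime_theory L \<Gamma> \<Longrightarrow> is_theory L \<Gamma>"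
  unfolding prime_theory_def by simp

lemma theory_deriv: "is_theory L \<Gamma> \<Longrightarrow> deriv L \<Gamma> \<phi> \<Longrightarrow> \<phi> \<in> \<Gamma>"
  unfolding is_theory_def by blast

lemma theory_theorem: "is_theory L \<Gamma> \<Longrightarrow> deriv L {} \<phi> \<Longrightarrow> \<phi> \<in> \<Gamma>"
  by (blast intro: theory_deriv deriv_theorem)

lemma theory_mp: "is_theory L \<Gamma> \<Longrightarrow> Imp \<phi> \<psi> \<in> \<Gamma> \<Longrightarrow> \<phi> \<in> \<Gamma> \<Longrightarrow> \<psi> \<in> \<Gamma>"
  by (blast intro: theory_deriv deriv_mp deriv.El)

lemma theory_theorem_mp: "is_theory L \<Gamma> \<Longrightarrow> deriv L {} (Imp \<phi> \<psi>) \<Longrightarrow> \<phi> \<in> \<Gamma> \<Longrightarrow> \<psi> \<in> \<Gamma>"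
  by (blast intro: theory_mp theory_theorem)

lemma theory_And: "is_theory L \<Gamma> \<Longrightarrow> And \<phi> \<psi> \<in> \<Gamma> \<longleftrightarrow> \<phi> \<in> \<Gamma> \<and> \<psi> \<in> \<Gamma>"
  by (meson ax_conjunct1 ax_conjunct2 ax_conjI theory_mp theory_theorem_mp)

lemma prime_theory_Or: "prime_theory L \<Gamma> \<Longrightarrow> Or \<phi> \<psi> \<in> \<Gamma> \<longleftrightarrow> \<phi> \<in> \<Gamma> \<or> \<psi> \<in> \<Gamma>"
  unfolding prime_theory_def by (meson ax_disjI1 ax_disjI2 theory_theorem_mp)

lemma theory_Bot: "is_theory L \<Gamma> \<Longrightarrow> Bot \<in> \<Gamma> \<longleftrightarrow> \<Gamma> = UNIV"
  using theory_theorem_mp[OF _ ax_botE, of L \<Gamma>] by blast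

lemma prime_theory_UNIV: "prime_theory L UNIV"
  unfolding prime_theory_def is_theory_def by simp

lemma theory_imp_trans:
  "is_theory L \<Gamma> \<Longrightarrow> Imp \<phi> \<psi> \<in> \<Gamma> \<Longrightarrow> Imp \<psi> \<chi> \<in> \<Gamma> \<Longrightarrow> Imp \<phi> \<chi> \<in> \<Gamma>"
  by (blast intro: theory_deriv deriv_imp_trans deriv.El)

lemma theory_imp_mp:
  "is_theory L \<Gamma> \<Longrightarrow> Imp \<phi> (Imp \<psi> \<chi>) \<in> \<Gamma> \<Longrightarrow> Imp \<phi> \<psi> \<in> \<Gamma> \<Longrightarrow> Imp \<phi> \<chi> \<in> \<Gamma>"
  by (blast intro: theory_mp theory_theorem_mp ax_S)

lemma deriv_Union_chain:
  assumes "deriv L (\<Union>\<C>) \<phi>" "\<C> \<noteq> {}" "subset.chain \<A> \<C>"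
  shows "\<exists>\<Gamma>\<in>\<C>. deriv L \<Gamma> \<phi>"
proof -
  obtain \<Gamma>0 where "\<Gamma>0 \<subseteq> \<Union>\<C>" "finite \<Gamma>0" "deriv L \<Gamma>0 \<phi>"
    using deriv_finite_subset[OF assms(1)] by blast
  moreover obtain \<Gamma> where "\<Gamma> \<in> \<C>" "\<Gamma>0 \<subseteq> \<Gamma>"
    using finite_subset_Union_chain[OF \<open>finite \<Gamma>0\<close> \<open>\<Gamma>0 \<subseteq> \<Union>\<C>\<close> assms(2,3)] .
  ultimately show ?thesis by (blast intro: deriv_mono)
qed

definition imp_directed :: "ax set \<Rightarrow> fm set \<Rightarrow> bool" where
  "imp_directed L A \<longleftrightarrow>
     (\<forall>\<phi>\<in>A. \<forall>\<psi>\<in>A. \<exists>\<chi>\<in>A. deriv L {} (Imp \<phi> \<chi>) \<and> deriv L {} (Imp \<psi> \<chi>))"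

lemma imp_directed_subsingleton: "A \<subseteq> {\<phi>} \<Longrightarrow> imp_directed L A"
  unfolding imp_directed_def using deriv_imp_refl by blast

text \<open>Directedness of \<open>A\<close>, rather than closure under disjunction, suffices: it covers a
  single omitted formula as well as, under \<open>CD\<close>, the set of all \<open>\<phi>\<close> with \<open>\<diamond>\<phi>\<close> false.\<close>
lemma lindenbaum:
  assumes avoid: "\<forall>\<chi>\<in>A. \<not> deriv L \<Gamma> \<chi>" and dir: "imp_directed L A"
  shows "\<exists>\<Delta>. prime_theory L \<Delta> \<and> \<Gamma> \<subseteq> \<Delta> \<and> \<Delta> \<inter> A = {}"
proof -
  define \<A> where "\<A> = {\<Delta>. \<Gamma> \<subseteq> \<Delta> \<and> (\<forall>\<chi>\<in>A. \<not> deriv L \<Delta> \<chi>)}"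
  have "\<exists>M\<in>\<A>. \<forall>\<Delta>\<in>\<A>. M \<subseteq> \<Delta> \<longrightarrow> \<Delta> = M"
  proof (rule subset_Zorn_nonempty)
    show "\<A> \<noteq> {}" using avoid unfolding \<A>_def by blast
    show "\<Union>\<C> \<in> \<A>" if ne: "\<C> \<noteq> {}" and ch: "subset.chain \<A> \<C>" for \<C>
    proof -
      have "\<C> \<subseteq> \<A>" using ch unfolding subset.chain_def by blast
      then have "\<Gamma> \<subseteq> \<Union>\<C>" using ne unfolding \<A>_def by blast
      moreover have "\<not> deriv L (\<Union>\<C>) \<chi>" if "\<chi> \<in> A" for \<chi>
        using deriv_Union_chain[OF _ ne ch] \<open>\<C> \<subseteq> \<A>\<close> that unfolding \<A>_def by blast
      ultimately show ?thesis unfolding \<A>_def by blast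
    qed
  qed
  then obtain M where "M \<in> \<A>" and max: "\<And>\<Delta>. \<Delta> \<in> \<A> \<Longrightarrow> M \<subseteq> \<Delta> \<Longrightarrow> \<Delta> = M"
    by blast
  then have M: "\<Gamma> \<subseteq> M" "\<And>\<chi>. \<chi> \<in> A \<Longrightarrow> \<not> deriv L M \<chi>"
    unfolding \<A>_def by blast+
  have extend: "\<phi> \<in> M" if "\<forall>\<chi>\<in>A. \<not> deriv L (insert \<phi> M) \<chi>" for \<phi>
    using max[of "insert \<phi> M"] that M(1) unfolding \<A>_def by blast
  have "is_theory L M"
    unfolding is_theory_def using M(2) by (blast intro: extend deriv_cut)
  moreover have "\<phi> \<in> M \<or> \<psi> \<in> M" if "Or \<phi> \<psi> \<in> M" for \<phi> \<psi>
  proof (rule ccontr)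
    assume "\<not> (\<phi> \<in> M \<or> \<psi> \<in> M)"
    then obtain \<chi>1 \<chi>2 where "\<chi>1 \<in> A" "deriv L (insert \<phi> M) \<chi>1" "\<chi>2 \<in> A" "deriv L (insert \<psi> M) \<chi>2"
      using extend by blast
    moreover obtain \<chi> where "\<chi> \<in> A" "deriv L {} (Imp \<chi>1 \<chi>)" "deriv L {} (Imp \<chi>2 \<chi>)"
      using dir calculation unfolding imp_directed_def by blast
    ultimately have "deriv L (insert \<phi> M) \<chi>" "deriv L (insert \<psi> M) \<chi>"
      by (meson deriv_theorem deriv_mp)+
    then have "deriv L M \<chi>"
      using deriv_disjE[OF deriv.El[OF that]] by blast
    then show False using M(2) \<open>\<chi> \<in> A\<close> by blast
  qed
  moreover have "M \<inter> A = {}" using M(2) deriv.El by blast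
  ultimately show ?thesis using M(1) unfolding prime_theory_def by blast
qed

lemma lindenbaum_single:
  "\<not> deriv L \<Gamma> \<phi> \<Longrightarrow> \<exists>\<Delta>. prime_theory L \<Delta> \<and> \<Gamma> \<subseteq> \<Delta> \<and> \<phi> \<notin> \<Delta>"
  using lindenbaum[of "{\<phi>}"] imp_directed_subsingleton[of "{\<phi>}"] by blast

definition unbox :: "fm set \<Rightarrow> fm set" where
  "unbox \<Gamma> = {\<phi>. Box \<phi> \<in> \<Gamma>}"

lemma theory_Box_theorem: "is_theory L \<Gamma> \<Longrightarrow> deriv L {} \<phi> \<Longrightarrow> Box \<phi> \<in> \<Gamma>"
  by (blast intro: theory_theorem deriv.Nec)

lemma theory_Box_mono: "is_theory L \<Gamma> \<Longrightarrow> deriv L {} (Imp \<phi> \<psi>) \<Longrightarrow> Box \<phi> \<in> \<Gamma> \<Longrightarrow> Box \<psi> \<in> \<Gamma>"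
  by (blast intro: theory_theorem_mp deriv_box_mono)

lemma theory_Box_mp: "is_theory L \<Gamma> \<Longrightarrow> Box (Imp \<phi> \<psi>) \<in> \<Gamma> \<Longrightarrow> Box \<phi> \<in> \<Gamma> \<Longrightarrow> Box \<psi> \<in> \<Gamma>"
  by (blast intro: theory_mp theory_theorem deriv.KBox)

lemma theory_Dia_mp: "is_theory L \<Gamma> \<Longrightarrow> Box (Imp \<phi> \<psi>) \<in> \<Gamma> \<Longrightarrow> Dia \<phi> \<in> \<Gamma> \<Longrightarrow> Dia \<psi> \<in> \<Gamma>"
  by (blast intro: theory_mp theory_theorem deriv.KDia)

lemma theory_Dia_Bot: "is_theory L \<Gamma> \<Longrightarrow> Dia Bot \<in> \<Gamma> \<Longrightarrow> Dia \<phi> \<in> \<Gamma>"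
  by (blast intro: theory_Dia_mp theory_Box_theorem ax_botE)

lemma unbox_deriv_Box:
  assumes \<Gamma>: "is_theory L \<Gamma>" and "deriv L (unbox \<Gamma>) \<phi>"
  shows "Box \<phi> \<in> \<Gamma>"
proof -
  have "\<phi> \<in> unbox \<Gamma>"
  proof (rule deriv_in_MP_closed[OF assms(2) order.refl])
    show "\<psi> \<in> unbox \<Gamma>" if "deriv L {} \<psi>" for \<psi>
      using theory_Box_theorem[OF \<Gamma> that] unfolding unbox_def by simp
    show "\<chi> \<in> unbox \<Gamma>" if "\<psi> \<in> unbox \<Gamma>" "Imp \<psi> \<chi> \<in> unbox \<Gamma>" for \<psi> \<chi>
      using theory_Box_mp[OF \<Gamma>] that unfolding unbox_def by blast
  qed
  then show ?thesis unfolding unbox_def by simp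
qed

text \<open>The formulas \<open>\<psi>\<close> with \<open>\<box>(\<theta> \<rightarrow> \<psi>) \<in> \<Gamma>\<close> for some \<open>\<theta> \<in> T\<close> contain \<open>T\<close> and
  \<open>unbox \<Gamma>\<close> and are closed under modus ponens (as \<open>T\<close> is closed under conjunction);
  then \<open>K\<^sub>\<diamond>\<close> applies.\<close>
lemma unbox_deriv_Dia:
  assumes \<Gamma>: "is_theory L \<Gamma>" and T: "is_theory L T" and Dia_T: "\<forall>\<theta>\<in>T. Dia \<theta> \<in> \<Gamma>"
    and "deriv L (T \<union> unbox \<Gamma>) \<psi>"
  shows "Dia \<psi> \<in> \<Gamma>"
proof -
  define E where "E = {\<phi>. \<exists>\<theta>\<in>T. Box (Imp \<theta> \<phi>) \<in> \<Gamma>}"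
  have top: "Imp Bot Bot \<in> T" using theory_theorem[OF T deriv_imp_refl] .
  have "\<psi> \<in> E"
  proof (rule deriv_in_MP_closed[OF assms(4)])
    have "\<theta> \<in> E" if "\<theta> \<in> T" for \<theta>
      using that theory_Box_theorem[OF \<Gamma> deriv_imp_refl] unfolding E_def by blast
    moreover have "\<phi> \<in> E" if "\<phi> \<in> unbox \<Gamma>" for \<phi>
      using top theory_Box_mono[OF \<Gamma> ax_K] that unfolding E_def unbox_def by blast
    ultimately show "T \<union> unbox \<Gamma> \<subseteq> E" by blast
    show "\<phi> \<in> E" if "deriv L {} \<phi>" for \<phi>
      using top theory_Box_theorem[OF \<Gamma> deriv_imp_weaken[OF that]] unfolding E_def by blast
    show "\<chi> \<in> E" if E: "\<phi> \<in> E" "Imp \<phi> \<chi> \<in> E" for \<phi> \<chi>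
    proof -
      obtain \<theta>1 \<theta>2 where "\<theta>1 \<in> T" "\<theta>2 \<in> T"
        and "Box (Imp \<theta>1 \<phi>) \<in> \<Gamma>" "Box (Imp \<theta>2 (Imp \<phi> \<chi>)) \<in> \<Gamma>"
        using E unfolding E_def by blast
      then have "Box (Imp (And \<theta>1 \<theta>2) \<phi>) \<in> \<Gamma>" "Box (Imp (And \<theta>1 \<theta>2) (Imp \<phi> \<chi>)) \<in> \<Gamma>"
        using theory_Box_mono[OF \<Gamma> deriv_imp_And_left] theory_Box_mono[OF \<Gamma> deriv_imp_And_right]
        by blast+
      then have "Box (Imp (And \<theta>1 \<theta>2) \<chi>) \<in> \<Gamma>"
        by (blast intro: theory_Box_mp[OF \<Gamma>] theory_Box_mono[OF \<Gamma> ax_S])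
      moreover have "And \<theta>1 \<theta>2 \<in> T" using \<open>\<theta>1 \<in> T\<close> \<open>\<theta>2 \<in> T\<close> theory_And[OF T] by blast
      ultimately show ?thesis unfolding E_def by blast
    qed
  qed
  then show ?thesis using Dia_T theory_Dia_mp[OF \<Gamma>] unfolding E_def by blast
qed

lemma unbox_deriv_Dia_single:
  assumes \<Gamma>: "is_theory L \<Gamma>" and "Dia \<chi> \<in> \<Gamma>" and "deriv L (insert \<chi> (unbox \<Gamma>)) \<psi>"
  shows "Dia \<psi> \<in> \<Gamma>"
proof (rule unbox_deriv_Dia[OF \<Gamma>])
  let ?T = "{\<theta>. deriv L {\<chi>} \<theta>}"
  show "is_theory L ?T" unfolding is_theory_def by (blast intro: deriv_trans)
  show "\<forall>\<theta>\<in>?T. Dia \<theta> \<in> \<Gamma>"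
    using assms(2) by (blast intro: theory_theorem_mp[OF \<Gamma>] deriv_dia_mono deduction)
  show "deriv L (?T \<union> unbox \<Gamma>) \<psi>"
    using assms(3) by (rule deriv_mono) (auto intro: deriv.El)
qed

section \<open>Soundness\<close>

lemma ck_frameD:
  assumes "ck_frame X e le R"
  shows "le x y \<Longrightarrow> x \<in> X \<and> y \<in> X" and "R x y \<Longrightarrow> x \<in> X \<and> y \<in> X"
    and "x \<in> X \<Longrightarrow> le x x" and "le x y \<Longrightarrow> le y z \<Longrightarrow> le x z"
    and "e \<in> X" and "le e x \<Longrightarrow> x = e" and "x \<in> X \<Longrightarrow> R e x \<longleftrightarrow> x = e"
  using assms unfolding ck_frame_def by auto

locale ck_model =
  fixes X :: "'w set" and e :: 'w and le R :: "'w \<Rightarrow> 'w \<Rightarrow> bool" and V :: "nat \<Rightarrow> 'w set"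
  assumes frame: "ck_frame X e le R" and val: "valuation X e le V"
begin

abbreviation forces_at :: "'w \<Rightarrow> fm \<Rightarrow> bool" (infix "\<Vdash>" 50) where
  "x \<Vdash> \<phi> \<equiv> forces X e le R V x \<phi>"

lemmas R_in_X = ck_frameD(2)[OF frame]
  and le_refl = ck_frameD(3)[OF frame]
  and le_trans = ck_frameD(4)[OF frame]
  and e_in_X = ck_frameD(5)[OF frame]
  and e_maximal = ck_frameD(6)[OF frame]
  and R_from_e = ck_frameD(7)[OF frame]

lemma forces_mono: "x \<Vdash> \<phi> \<Longrightarrow> le x y \<Longrightarrow> y \<Vdash> \<phi>"
proof (induction \<phi> arbitrary: x y)
  case (Var p)
  then show ?case using val unfolding valuation_def by auto
next
  case Bot
  then show ?case using e_maximal by simp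
next
  case (And \<phi> \<psi>)
  then show ?case by auto
next
  case (Or \<phi> \<psi>)
  then show ?case by auto
next
  case (Imp \<phi> \<psi>)
  show ?case
  proof (simp only: forces.simps, intro ballI impI)
    fix z assume "z \<in> X" "le y z" "z \<Vdash> \<phi>"
    moreover have "le x z" using Imp.prems(2) \<open>le y z\<close> by (rule le_trans)
    ultimately show "z \<Vdash> \<psi>" using Imp.prems(1) by simp
  qed
next
  case (Box \<phi>)
  show ?case
  proof (simp only: forces.simps, intro ballI impI)
    fix z u assume "z \<in> X" "u \<in> X" "le y z" "R z u"
    moreover have "le x z" using Box.prems(2) \<open>le y z\<close> by (rule le_trans)
    ultimately show "u \<Vdash> \<phi>" using Box.prems(1) by simp
  qed
next
  case (Dia \<phi>)
  show ?case
  proof (simp only: forces.simps, intro ballI impI)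
    fix z assume "z \<in> X" "le y z"
    moreover have "le x z" using Dia.prems(2) \<open>le y z\<close> by (rule le_trans)
    ultimately show "\<exists>u\<in>X. R z u \<and> u \<Vdash> \<phi>" using Dia.prems(1) by simp
  qed
qed

lemma e_forces: "e \<Vdash> \<phi>"
proof (induction \<phi>)
  case (Var p)
  then show ?case using val unfolding valuation_def by auto
next
  case (Imp \<phi> \<psi>)
  then show ?case by (auto dest: e_maximal)
next
  case (Box \<phi>)
  then show ?case by (auto dest: e_maximal simp: R_from_e)
next
  case (Dia \<phi>)
  then show ?case by (auto dest: e_maximal simp: R_from_e e_in_X)
qed simp_all

lemma ipc_axiom_valid: "ipc_axiom \<phi> \<Longrightarrow> x \<Vdash> \<phi>"
proof (induction rule: ipc_axiom.induct)
  case (A2 p q r)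
  then show ?case by simp (meson le_refl le_trans)
next
  case (A9 p)
  then show ?case using e_forces by simp
qed (auto intro: forces_mono dest: le_trans)

lemma KBox_valid: "x \<Vdash> Imp (Box (Imp p q)) (Imp (Box p) (Box q))"
  by simp (meson le_refl le_trans)

lemma KDia_valid: "x \<Vdash> Imp (Box (Imp p q)) (Imp (Dia p) (Dia q))"
  by simp (meson le_refl le_trans)

lemma NDB_valid_if_N_corr:
  assumes "N_corr X e le R"
  shows "x \<Vdash> Imp (Dia Bot) (Box Bot)"
  using assms unfolding N_corr_def by simp

lemma NDB_valid_if_N_suff:
  assumes "N_suff X e le R"
  shows "x \<Vdash> Imp (Dia Bot) (Box Bot)"
  using assms unfolding N_suff_def by simp

text \<open>The point \<open>y'\<close> supplied by the frame condition at \<open>y\<close> has a successor \<open>z\<close> forcing one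
  disjunct, and every world above \<open>y\<close> sees a world above \<open>z\<close>; persistence finishes the proof.\<close>
lemma CD_valid_if_C_suff:
  assumes C: "C_suff X e le R"
  shows "x \<Vdash> Imp (Dia (Or p q)) (Or (Dia p) (Dia q))"
proof (subst forces.simps, intro ballI impI)
  fix y assume y: "y \<in> X" and "le x y" and Dia_Or: "y \<Vdash> Dia (Or p q)"
  obtain y' where "y' \<in> X" "le y y'"
    and sees_above: "\<And>u z. u \<in> X \<Longrightarrow> z \<in> X \<Longrightarrow> le y u \<Longrightarrow> R y' z \<Longrightarrow> \<exists>w\<in>X. R u w \<and> le z w"
    using C y unfolding C_suff_def by blast
  then obtain z where z: "z \<in> X" "R y' z" "z \<Vdash> p \<or> z \<Vdash> q"
    using Dia_Or by auto
  have "y \<Vdash> Dia \<chi>" if "z \<Vdash> \<chi>" for \<chi>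
  proof (subst forces.simps, intro ballI impI)
    fix u assume "u \<in> X" "le y u"
    then obtain w where "w \<in> X" "R u w" "le z w" using sees_above z(1,2) by blast
    then show "\<exists>w\<in>X. R u w \<and> w \<Vdash> \<chi>" using forces_mono[OF that] by blast
  qed
  then show "y \<Vdash> Or (Dia p) (Dia q)" using z(3) by auto
qed

lemma IDB_valid_if_I_suff:
  assumes I: "I_suff X e le R"
  shows "x \<Vdash> Imp (Imp (Dia p) (Box q)) (Box (Imp p q))"
proof (subst forces.simps, intro ballI impI)
  fix y assume "y \<in> X" "le x y" and hyp: "y \<Vdash> Imp (Dia p) (Box q)"
  show "y \<Vdash> Box (Imp p q)"
  proof (subst forces.simps, intro ballI impI)
    fix y1 z assume "y1 \<in> X" "z \<in> X" "le y y1" "R y1 z"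
    show "z \<Vdash> Imp p q"
    proof (subst forces.simps, intro ballI impI)
      fix z1 assume "z1 \<in> X" "le z z1" and p: "z1 \<Vdash> p"
      have "\<exists>u\<in>X. le y1 u \<and> R u z1 \<and> (\<forall>s\<in>X. le u s \<longrightarrow> (\<exists>t\<in>X. R s t \<and> le z1 t))"
        using I[unfolded I_suff_def, rule_format, OF \<open>y1 \<in> X\<close> \<open>z \<in> X\<close> \<open>z1 \<in> X\<close>]
          \<open>R y1 z\<close> \<open>le z z1\<close> by simp
      then obtain u where u: "u \<in> X" "le y1 u" "R u z1"
        and sees_above: "\<And>s. s \<in> X \<Longrightarrow> le u s \<Longrightarrow> \<exists>t\<in>X. R s t \<and> le z1 t"
        by blast
      have "u \<Vdash> Dia p"
      proof (subst forces.simps, intro ballI impI)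
        fix s assume "s \<in> X" "le u s"
        then obtain t where "t \<in> X" "R s t" "le z1 t" using sees_above by blast
        then show "\<exists>t\<in>X. R s t \<and> t \<Vdash> p" using forces_mono[OF p] by blast
      qed
      moreover have "le y u" using \<open>le y y1\<close> u(2) by (rule le_trans)
      ultimately have "u \<Vdash> Box q" using hyp u(1) by (subst (asm) forces.simps) blast
      then show "z1 \<Vdash> q" using u(1,3) \<open>z1 \<in> X\<close> le_refl[OF u(1)] by simp
    qed
  qed
qed

lemma extra_axiom_valid:
  assumes "in_class nc Ax X e le R" "A \<in> insert NDB Ax" "ax_instance A \<phi>"
  shows "x \<Vdash> \<phi>"
proof (cases A)
  case NDB
  then show ?thesis
    using assms NDB_valid_if_N_corr NDB_valid_if_N_suff unfolding in_class_def
    by (cases nc) auto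
next
  case CD
  then show ?thesis using assms CD_valid_if_C_suff unfolding in_class_def by auto
next
  case IDB
  then show ?thesis using assms IDB_valid_if_I_suff unfolding in_class_def by auto
qed

lemma deriv_sound:
  assumes "deriv L \<Gamma> \<phi>"
    and extra_valid: "\<And>A \<psi> y. A \<in> L \<Longrightarrow> ax_instance A \<psi> \<Longrightarrow> y \<Vdash> \<psi>"
    and "x \<in> X" "\<forall>\<psi>\<in>\<Gamma>. x \<Vdash> \<psi>"
  shows "x \<Vdash> \<phi>"
proof -
  have "x \<Vdash> \<phi>" if "deriv L' \<Gamma> \<phi>" "L' = L" "x \<in> X" "\<forall>\<psi>\<in>\<Gamma>. x \<Vdash> \<psi>" for L' \<Gamma> \<phi> x
    using that
  proof (induction arbitrary: x rule: deriv.induct)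
    case (ipc \<phi>)
    then show ?case by (blast intro: ipc_axiom_valid)
  next
    case KBox
    show ?case by (rule KBox_valid)
  next
    case KDia
    show ?case by (rule KDia_valid)
  next
    case (extra A)
    then show ?case by (blast intro: extra_valid)
  next
    case El
    then show ?case by blast
  next
    case MP
    then show ?case using le_refl by auto
  next
    case Nec
    then show ?case using R_in_X by auto
  qed
  then show ?thesis using assms by blast
qed

end

lemma soundness:
  assumes "deriv (insert NDB Ax) \<Gamma> \<phi>"
  shows "conseq TYPE('w) nc Ax \<Gamma> \<phi>"
  unfolding conseq_def
proof (intro allI impI ballI)
  fix X :: "'w set" and e le R V x
  assume cls: "in_class nc Ax X e le R" and val: "valuation X e le V"
    and "x \<in> X" "\<forall>\<psi>\<in>\<Gamma>. forces X e le R V x \<psi>"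
  interpret ck_model X e le R V
    using cls val by unfold_locales (simp_all add: in_class_def)
  have "\<And>A \<psi> y. A \<in> insert NDB Ax \<Longrightarrow> ax_instance A \<psi> \<Longrightarrow> forces X e le R V y \<psi>"
    by (rule extra_axiom_valid[OF cls])
  then show "forces X e le R V x \<phi>"
    using deriv_sound[OF assms] \<open>x \<in> X\<close> \<open>\<forall>\<psi>\<in>\<Gamma>. _\<close> by blast
qed

section \<open>The canonical model\<close>

definition Dia_false :: "fm set \<Rightarrow> fm set" where
  "Dia_false \<Gamma> = {\<phi>. Dia \<phi> \<notin> \<Gamma>}"

definition successors :: "ax set \<Rightarrow> fm set \<Rightarrow> fm set \<Rightarrow> fm set set" where
  "successors L \<Gamma> A = {\<Delta>. prime_theory L \<Delta> \<and> unbox \<Gamma> \<subseteq> \<Delta> \<and> \<Delta> \<inter> A = {}}"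

text \<open>Requiring \<open>\<bottom> \<in> A\<close> unless \<open>\<diamond>\<bottom> \<in> \<Gamma>\<close> keeps the exploding world away from the
  successors of worlds not forcing \<open>\<diamond>\<bottom>\<close>. Different choices of \<open>A\<close> over the same \<open>\<Gamma>\<close>
  supply the witnesses for the truth lemma and for \<open>C_suff\<close>.\<close>
definition canon_world :: "ax set \<Rightarrow> fm set \<Rightarrow> fm set \<Rightarrow> bool" where
  "canon_world L \<Gamma> A \<longleftrightarrow>
     prime_theory L \<Gamma> \<and> A \<subseteq> Dia_false \<Gamma> \<and> (Dia Bot \<notin> \<Gamma> \<longrightarrow> Bot \<in> A) \<and>
     (\<forall>\<psi>. Dia \<psi> \<in> \<Gamma> \<longrightarrow> (\<exists>\<Delta>\<in>successors L \<Gamma> A. \<psi> \<in> \<Delta>)) \<and>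
     (\<forall>T. prime_theory L T \<longrightarrow> (\<forall>\<theta>\<in>T. Dia \<theta> \<in> \<Gamma>) \<longrightarrow> (\<exists>\<Delta>\<in>successors L \<Gamma> A. T \<subseteq> \<Delta>))"

lemma canon_worldI:
  assumes \<Gamma>: "prime_theory L \<Gamma>" and A: "A \<subseteq> Dia_false \<Gamma>" "Dia Bot \<notin> \<Gamma> \<longrightarrow> Bot \<in> A"
    and dir: "imp_directed L A"
  shows "canon_world L \<Gamma> A"
proof -
  have \<Gamma>': "is_theory L \<Gamma>" using \<Gamma> by (rule prime_theory_is_theory)
  have successor: "\<exists>\<Delta>\<in>successors L \<Gamma> A. S \<subseteq> \<Delta>"
    if "\<And>\<chi>. deriv L (S \<union> unbox \<Gamma>) \<chi> \<Longrightarrow> Dia \<chi> \<in> \<Gamma>" for S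
  proof -
    have "\<forall>\<chi>\<in>A. \<not> deriv L (S \<union> unbox \<Gamma>) \<chi>"
      using that A(1) unfolding Dia_false_def by blast
    then obtain \<Delta> where "prime_theory L \<Delta>" "S \<union> unbox \<Gamma> \<subseteq> \<Delta>" "\<Delta> \<inter> A = {}"
      using lindenbaum[OF _ dir] by blast
    then show ?thesis unfolding successors_def by blast
  qed
  have "\<exists>\<Delta>\<in>successors L \<Gamma> A. \<psi> \<in> \<Delta>" if "Dia \<psi> \<in> \<Gamma>" for \<psi>
    using successor[of "{\<psi>}"] unbox_deriv_Dia_single[OF \<Gamma>' that] by simp
  moreover have "\<exists>\<Delta>\<in>successors L \<Gamma> A. T \<subseteq> \<Delta>"
    if "prime_theory L T" "\<forall>\<theta>\<in>T. Dia \<theta> \<in> \<Gamma>" for T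
    using successor unbox_deriv_Dia[OF \<Gamma>' prime_theory_is_theory[OF that(1)] that(2)] by blast
  ultimately show ?thesis using \<Gamma> A unfolding canon_world_def by blast
qed

definition plain_world :: "fm set \<Rightarrow> fm set \<times> fm set" where
  "plain_world \<Gamma> = (\<Gamma>, {Bot} \<inter> Dia_false \<Gamma>)"

lemma canon_world_plain: "prime_theory L \<Gamma> \<Longrightarrow> canon_world L \<Gamma> ({Bot} \<inter> Dia_false \<Gamma>)"
  by (rule canon_worldI) (auto simp: Dia_false_def intro: imp_directed_subsingleton[of _ Bot])

lemma canon_world_omitting:
  assumes \<Gamma>: "prime_theory L \<Gamma>" and "Dia \<psi> \<notin> \<Gamma>"
  shows "canon_world L \<Gamma> {\<psi>, Bot}"
proof (rule canon_worldI[OF \<Gamma>])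
  show "{\<psi>, Bot} \<subseteq> Dia_false \<Gamma>"
    using assms theory_Dia_Bot[OF prime_theory_is_theory] unfolding Dia_false_def by blast
  show "imp_directed L {\<psi>, Bot}"
    unfolding imp_directed_def by (blast intro: deriv_imp_refl ax_botE)
qed simp

lemma canon_world_Dia_false:
  assumes \<Gamma>: "prime_theory L \<Gamma>" and CD: "CD \<in> L"
  shows "canon_world L \<Gamma> (Dia_false \<Gamma>)"
proof (rule canon_worldI[OF \<Gamma>])
  have "Or \<phi> \<psi> \<in> Dia_false \<Gamma>" if "\<phi> \<in> Dia_false \<Gamma>" "\<psi> \<in> Dia_false \<Gamma>" for \<phi> \<psi>
  proof -
    have "deriv L {} (Imp (Dia (Or \<phi> \<psi>)) (Or (Dia \<phi>) (Dia \<psi>)))"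
      using CD by (intro deriv.extra) auto
    then show ?thesis
      using that prime_theory_Or[OF \<Gamma>] theory_theorem_mp[OF prime_theory_is_theory[OF \<Gamma>]]
      unfolding Dia_false_def by blast
  qed
  then show "imp_directed L (Dia_false \<Gamma>)"
    unfolding imp_directed_def by (blast intro: ax_disjI1 ax_disjI2)
qed (auto simp: Dia_false_def)

definition canon_W :: "ax set \<Rightarrow> (fm set \<times> fm set) set" where
  "canon_W L = {(\<Gamma>, A). canon_world L \<Gamma> A}"

definition canon_e :: "fm set \<times> fm set" where
  "canon_e = (UNIV, {})"

definition canon_le :: "ax set \<Rightarrow> fm set \<times> fm set \<Rightarrow> fm set \<times> fm set \<Rightarrow> bool" where
  "canon_le L w v \<longleftrightarrow> w \<in> canon_W L \<and> v \<in> canon_W L \<and> fst w \<subseteq> fst v"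

definition canon_R :: "ax set \<Rightarrow> fm set \<times> fm set \<Rightarrow> fm set \<times> fm set \<Rightarrow> bool" where
  "canon_R L w v \<longleftrightarrow> w \<in> canon_W L \<and> v \<in> canon_W L \<and> fst v \<in> successors L (fst w) (snd w)"

definition canon_V :: "ax set \<Rightarrow> nat \<Rightarrow> (fm set \<times> fm set) set" where
  "canon_V L p = {w \<in> canon_W L. Var p \<in> fst w}"

abbreviation canon_forces :: "ax set \<Rightarrow> fm set \<times> fm set \<Rightarrow> fm \<Rightarrow> bool" where
  "canon_forces L \<equiv> forces (canon_W L) canon_e (canon_le L) (canon_R L) (canon_V L)"

lemma canon_W_prime_theory: "w \<in> canon_W L \<Longrightarrow> prime_theory L (fst w)"
  unfolding canon_W_def canon_world_def by auto

lemma canon_W_theory: "w \<in> canon_W L \<Longrightarrow> is_theory L (fst w)"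
  by (rule prime_theory_is_theory[OF canon_W_prime_theory])

lemma canon_W_world: "w \<in> canon_W L \<Longrightarrow> canon_world L (fst w) (snd w)"
  unfolding canon_W_def by auto

lemma plain_world_in_canon_W: "prime_theory L \<Gamma> \<Longrightarrow> plain_world \<Gamma> \<in> canon_W L"
  unfolding canon_W_def plain_world_def using canon_world_plain by auto

lemma canon_e_in_canon_W: "canon_e \<in> canon_W L"
  using canon_world_plain[OF prime_theory_UNIV, of L]
  unfolding canon_W_def canon_e_def Dia_false_def by simp

lemma canon_W_eq_canon_e: "w \<in> canon_W L \<Longrightarrow> Bot \<in> fst w \<Longrightarrow> w = canon_e"
  using theory_Bot[OF canon_W_theory]
  unfolding canon_W_def canon_e_def canon_world_def Dia_false_def by auto

lemma canon_le_from_canon_e: "canon_le L canon_e w \<Longrightarrow> w = canon_e"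
  using canon_W_eq_canon_e[of w L] unfolding canon_le_def canon_e_def by auto

lemma canon_R_from_canon_e: "w \<in> canon_W L \<Longrightarrow> canon_R L canon_e w \<longleftrightarrow> w = canon_e"
proof -
  assume w: "w \<in> canon_W L"
  have "UNIV \<in> successors L UNIV {}"
    using prime_theory_UNIV unfolding successors_def by simp
  moreover have "fst w \<in> successors L UNIV {} \<Longrightarrow> w = canon_e"
    using canon_W_eq_canon_e[OF w] unfolding successors_def unbox_def by auto
  ultimately show ?thesis
    using w canon_e_in_canon_W unfolding canon_R_def by (auto simp: canon_e_def)
qed

lemma ck_frame_canon: "ck_frame (canon_W L) canon_e (canon_le L) (canon_R L)"
  unfolding ck_frame_def
  using canon_le_from_canon_e canon_R_from_canon_e
  by (auto simp: canon_le_def canon_R_def canon_e_in_canon_W)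

lemma valuation_canon: "valuation (canon_W L) canon_e (canon_le L) (canon_V L)"
  unfolding valuation_def canon_V_def canon_le_def
  using canon_e_in_canon_W by (auto simp: canon_e_def)

lemma fst_plain_world [simp]: "fst (plain_world \<Delta>) = \<Delta>"
  unfolding plain_world_def by simp

lemma canon_R_plain_world:
  "w \<in> canon_W L \<Longrightarrow> \<Delta> \<in> successors L (fst w) (snd w) \<Longrightarrow> canon_R L w (plain_world \<Delta>)"
  unfolding canon_R_def successors_def by (simp add: plain_world_in_canon_W)

lemma canon_successor_containing:
  assumes w: "w \<in> canon_W L" and "prime_theory L T" "\<forall>\<theta>\<in>T. Dia \<theta> \<in> fst w"
  shows "\<exists>u. canon_R L w u \<and> T \<subseteq> fst u"
proof -
  obtain \<Delta> where "\<Delta> \<in> successors L (fst w) (snd w)" "T \<subseteq> \<Delta>"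
    using canon_W_world[OF w] assms(2,3) unfolding canon_world_def by blast
  then show ?thesis using canon_R_plain_world[OF w] by (intro exI[of _ "plain_world \<Delta>"]) simp
qed

lemma canon_Dia_witness:
  assumes w: "w \<in> canon_W L" and "Dia \<psi> \<in> fst w"
  shows "\<exists>u. canon_R L w u \<and> \<psi> \<in> fst u"
proof -
  obtain \<Delta> where "\<Delta> \<in> successors L (fst w) (snd w)" "\<psi> \<in> \<Delta>"
    using canon_W_world[OF w] assms(2) unfolding canon_world_def by blast
  then show ?thesis using canon_R_plain_world[OF w] by (intro exI[of _ "plain_world \<Delta>"]) simp
qed

lemma canon_Dia_counter_witness:
  assumes w: "w \<in> canon_W L" and "Dia \<psi> \<notin> fst w"
  shows "\<exists>v. canon_le L w v \<and> (\<forall>u. canon_R L v u \<longrightarrow> \<psi> \<notin> fst u)"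
proof (intro exI conjI allI impI)
  let ?v = "(fst w, {\<psi>, Bot})"
  have "?v \<in> canon_W L"
    using canon_world_omitting[OF canon_W_prime_theory[OF w] assms(2)] unfolding canon_W_def by simp
  then show "canon_le L w ?v" using w unfolding canon_le_def by simp
  show "\<psi> \<notin> fst u" if "canon_R L ?v u" for u
    using that unfolding canon_R_def successors_def by auto
qed

lemma canon_Imp_counter_witness:
  assumes w: "w \<in> canon_W L" and "Imp \<phi> \<psi> \<notin> fst w"
  shows "\<exists>v. canon_le L w v \<and> \<phi> \<in> fst v \<and> \<psi> \<notin> fst v"
proof -
  have "\<not> deriv L (insert \<phi> (fst w)) \<psi>"
    using assms deduction theory_deriv[OF canon_W_theory] by blast
  then obtain \<Delta> where "prime_theory L \<Delta>" "insert \<phi> (fst w) \<subseteq> \<Delta>" "\<psi> \<notin> \<Delta>"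
    using lindenbaum_single by blast
  then show ?thesis
    using w plain_world_in_canon_W unfolding canon_le_def by (intro exI[of _ "plain_world \<Delta>"]) auto
qed

lemma canon_Box_counter_witness:
  assumes w: "w \<in> canon_W L" and "Box \<phi> \<notin> fst w"
  shows "\<exists>v u. canon_le L w v \<and> canon_R L v u \<and> \<phi> \<notin> fst u"
proof -
  have "\<not> deriv L (unbox (fst w)) \<phi>"
    using assms unbox_deriv_Box[OF canon_W_theory] by blast
  then obtain \<Delta> where \<Delta>: "prime_theory L \<Delta>" "unbox (fst w) \<subseteq> \<Delta>" "\<phi> \<notin> \<Delta>"
    using lindenbaum_single by blast
  then have "Bot \<notin> \<Delta>" using theory_Bot[OF prime_theory_is_theory] by blast
  let ?v = "plain_world (fst w)"
  have v: "?v \<in> canon_W L" using plain_world_in_canon_W[OF canon_W_prime_theory[OF w]] .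
  then have "canon_le L w ?v" using w unfolding canon_le_def by simp
  moreover have "\<Delta> \<in> successors L (fst ?v) (snd ?v)"
    using \<Delta> \<open>Bot \<notin> \<Delta>\<close> unfolding successors_def plain_world_def by auto
  ultimately show ?thesis using canon_R_plain_world[OF v] \<Delta>(3) by fastforce
qed

lemma canon_Box_elim: "canon_R L v u \<Longrightarrow> Box \<phi> \<in> fst v \<Longrightarrow> \<phi> \<in> fst u"
  unfolding canon_R_def successors_def unbox_def by auto

lemma canon_le_mono: "canon_le L w v \<Longrightarrow> \<phi> \<in> fst w \<Longrightarrow> \<phi> \<in> fst v"
  unfolding canon_le_def by auto

lemma canon_le_in_canon_W: "canon_le L w v \<Longrightarrow> v \<in> canon_W L"
  unfolding canon_le_def by simp

lemma canon_R_in_canon_W: "canon_R L v u \<Longrightarrow> u \<in> canon_W L"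
  unfolding canon_R_def by simp

lemma canon_truth: "w \<in> canon_W L \<Longrightarrow> canon_forces L w \<phi> \<longleftrightarrow> \<phi> \<in> fst w"
proof (induction \<phi> arbitrary: w)
  case (Var p)
  then show ?case by (simp add: canon_V_def)
next
  case Bot
  then show ?case
    using canon_W_eq_canon_e[OF Bot] by (auto simp: canon_e_def)
next
  case (And \<phi> \<psi>)
  then show ?case using theory_And[OF canon_W_theory] by simp
next
  case (Or \<phi> \<psi>)
  then show ?case using prime_theory_Or[OF canon_W_prime_theory] by simp
next
  case (Imp \<phi> \<psi>)
  note IH = Imp.IH[OF canon_le_in_canon_W]
  show ?case
  proof
    assume "canon_forces L w (Imp \<phi> \<psi>)"
    then have "\<phi> \<in> fst v \<Longrightarrow> \<psi> \<in> fst v" if "canon_le L w v" for v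
      using that IH[OF that] canon_le_in_canon_W by simp
    then show "Imp \<phi> \<psi> \<in> fst w" using canon_Imp_counter_witness[OF Imp.prems] by blast
  next
    assume "Imp \<phi> \<psi> \<in> fst w"
    then have "\<psi> \<in> fst v" if "canon_le L w v" "\<phi> \<in> fst v" for v
      using that theory_mp[OF canon_W_theory[OF canon_le_in_canon_W]] canon_le_mono by blast
    then show "canon_forces L w (Imp \<phi> \<psi>)" using IH by simp
  qed
next
  case (Box \<phi>)
  note IH = Box.IH[OF canon_R_in_canon_W]
  show ?case
  proof
    assume F: "canon_forces L w (Box \<phi>)"
    have "\<phi> \<in> fst u" if "canon_le L w v" "canon_R L v u" for v u
    proof -
      have "canon_forces L u \<phi>"
        using F that canon_le_in_canon_W canon_R_in_canon_W by simp blast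
      then show ?thesis using IH[OF that(2)] by simp
    qed
    then show "Box \<phi> \<in> fst w" using canon_Box_counter_witness[OF Box.prems] by blast
  next
    assume "Box \<phi> \<in> fst w"
    then show "canon_forces L w (Box \<phi>)"
      using IH canon_Box_elim canon_le_mono by auto
  qed
next
  case (Dia \<psi>)
  note IH = Dia.IH[OF canon_R_in_canon_W]
  show ?case
  proof
    assume F: "canon_forces L w (Dia \<psi>)"
    have "\<exists>u. canon_R L v u \<and> \<psi> \<in> fst u" if v: "canon_le L w v" for v
    proof -
      obtain u where "canon_R L v u" "canon_forces L u \<psi>"
        using F v canon_le_in_canon_W by simp blast
      then show ?thesis using IH by blast
    qed
    then show "Dia \<psi> \<in> fst w" using canon_Dia_counter_witness[OF Dia.prems] by blast
  next
    assume "Dia \<psi> \<in> fst w"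
    have "\<exists>u\<in>canon_W L. canon_R L v u \<and> canon_forces L u \<psi>" if v: "canon_le L w v" for v
    proof -
      obtain u where "canon_R L v u" "\<psi> \<in> fst u"
        using canon_Dia_witness canon_le_in_canon_W[OF v] canon_le_mono[OF v \<open>Dia \<psi> \<in> fst w\<close>]
        by blast
      then show ?thesis using IH canon_R_in_canon_W by blast
    qed
    then show "canon_forces L w (Dia \<psi>)" by simp
  qed
qed

section \<open>Frame conditions of the canonical model\<close>

lemma theory_NDB: "is_theory L \<Gamma> \<Longrightarrow> NDB \<in> L \<Longrightarrow> Dia Bot \<in> \<Gamma> \<Longrightarrow> Box Bot \<in> \<Gamma>"
  by (erule theory_theorem_mp) (auto intro: deriv.extra)

lemma canon_N_corr:
  assumes "NDB \<in> L"
  shows "N_corr (canon_W L) canon_e (canon_le L) (canon_R L)"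
  unfolding N_corr_def
proof (intro ballI impI allI)
  fix w v u assume w: "w \<in> canon_W L" and "\<forall>v\<in>canon_W L. canon_le L w v \<longrightarrow> canon_R L v canon_e"
    and "v \<in> canon_W L" "u \<in> canon_W L" "canon_le L w v \<and> canon_R L v u"
  moreover from this have "canon_forces L w (Dia Bot)" using canon_e_in_canon_W by auto
  then have "Dia Bot \<in> fst w" using canon_truth[OF w] by blast
  then have "Box Bot \<in> fst w" using theory_NDB[OF canon_W_theory[OF w] assms] by blast
  then have "canon_forces L w (Box Bot)" using canon_truth[OF w] by blast
  ultimately show "u = canon_e" by auto
qed

lemma canon_N_suff:
  assumes "NDB \<in> L"
  shows "N_suff (canon_W L) canon_e (canon_le L) (canon_R L)"
  unfolding N_suff_def
proof (intro ballI impI)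
  fix w u assume w: "w \<in> canon_W L" and u: "u \<in> canon_W L" and R: "canon_R L w canon_e \<and> canon_R L w u"
  then have "snd w = {}" unfolding canon_R_def canon_e_def successors_def by auto
  then have "Dia Bot \<in> fst w" using canon_W_world[OF w] unfolding canon_world_def by auto
  then have "Box Bot \<in> fst w" using theory_NDB[OF canon_W_theory[OF w] assms] by blast
  then have "Bot \<in> fst u" using R canon_Box_elim by blast
  then show "u = canon_e" using canon_W_eq_canon_e[OF u] by blast
qed

text \<open>The \<open>x'\<close> of the condition is \<open>(\<Gamma>, Dia_false \<Gamma>)\<close>: every member of one of its successors
  is \<open>\<diamond>\<close>-true in \<open>\<Gamma>\<close>, hence at every world above \<open>x\<close>.\<close>
lemma canon_C_suff:
  assumes "CD \<in> L"
  shows "C_suff (canon_W L) canon_e (canon_le L) (canon_R L)"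
  unfolding C_suff_def
proof (intro ballI)
  fix w assume w: "w \<in> canon_W L"
  let ?w' = "(fst w, Dia_false (fst w))"
  have w': "?w' \<in> canon_W L"
    using canon_world_Dia_false[OF canon_W_prime_theory[OF w] assms] unfolding canon_W_def by simp
  moreover have "canon_le L w ?w'" using w w' unfolding canon_le_def by simp
  moreover have "\<exists>x\<in>canon_W L. canon_R L v x \<and> canon_le L u x"
    if v: "v \<in> canon_W L" and u: "u \<in> canon_W L" and "canon_le L w v \<and> canon_R L ?w' u" for v u
  proof -
    have "\<forall>\<theta>\<in>fst u. Dia \<theta> \<in> fst v"
      using that unfolding canon_R_def canon_le_def successors_def Dia_false_def by auto
    then obtain x where "canon_R L v x" "fst u \<subseteq> fst x"
      using canon_successor_containing[OF v canon_W_prime_theory[OF u]] by blast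
    then show ?thesis using u canon_R_in_canon_W unfolding canon_le_def by blast
  qed
  ultimately show "\<exists>w'\<in>canon_W L. canon_le L w w' \<and>
      (\<forall>v\<in>canon_W L. \<forall>u\<in>canon_W L. canon_le L w v \<and> canon_R L w' u \<longrightarrow>
        (\<exists>x\<in>canon_W L. canon_R L v x \<and> canon_le L u x))"
    by blast
qed

text \<open>\<open>\<Gamma>'\<close> extends \<open>\<Gamma> \<union> \<diamond>\<Theta>\<close> and omits every \<open>\<box>\<chi>\<close> with \<open>\<chi> \<notin> \<Theta>\<close>. This is possible
  because a consequence of \<open>\<Gamma> \<union> \<diamond>\<Theta>\<close> is implied in \<open>\<Gamma>\<close> by some \<open>\<diamond>\<theta>\<close>, \<open>\<theta> \<in> \<Theta>\<close>, and
  \<open>I\<^sub>\<diamond>\<^sub>\<box>\<close> turns \<open>\<diamond>\<theta> \<rightarrow> \<box>\<chi>\<close> into \<open>\<box>(\<theta> \<rightarrow> \<chi>)\<close>, which puts \<open>\<chi>\<close> into \<open>\<Theta>\<close>.\<close>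
lemma IDB_prime_extension:
  assumes IDB: "IDB \<in> L" and \<Gamma>: "prime_theory L \<Gamma>" and \<Theta>: "prime_theory L \<Theta>"
    and unbox: "unbox \<Gamma> \<subseteq> \<Theta>"
  shows "\<exists>\<Gamma>'. prime_theory L \<Gamma>' \<and> \<Gamma> \<subseteq> \<Gamma>' \<and> (\<forall>\<theta>\<in>\<Theta>. Dia \<theta> \<in> \<Gamma>') \<and> unbox \<Gamma>' \<subseteq> \<Theta>"
proof -
  have \<Gamma>': "is_theory L \<Gamma>" and \<Theta>': "is_theory L \<Theta>"
    using \<Gamma> \<Theta> by (simp_all add: prime_theory_is_theory)
  define E where "E = {\<phi>. \<exists>\<theta>\<in>\<Theta>. Imp (Dia \<theta>) \<phi> \<in> \<Gamma>}"
  have top: "Imp Bot Bot \<in> \<Theta>" using theory_theorem[OF \<Theta>' deriv_imp_refl] .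
  have in_E: "\<phi> \<in> E" if "deriv L (\<Gamma> \<union> Dia ` \<Theta>) \<phi>" for \<phi>
  proof (rule deriv_in_MP_closed[OF that])
    have "\<phi> \<in> E" if "\<phi> \<in> \<Gamma>" for \<phi>
      using top that theory_deriv[OF \<Gamma>' deriv_imp_weaken[OF deriv.El]] unfolding E_def by blast
    moreover have "Dia \<theta> \<in> E" if "\<theta> \<in> \<Theta>" for \<theta>
      using that theory_theorem[OF \<Gamma>' deriv_imp_refl] unfolding E_def by blast
    ultimately show "\<Gamma> \<union> Dia ` \<Theta> \<subseteq> E" by blast
    show "\<phi> \<in> E" if "deriv L {} \<phi>" for \<phi>
      using top theory_theorem[OF \<Gamma>' deriv_imp_weaken[OF that]] unfolding E_def by blast
    show "\<chi> \<in> E" if E: "\<phi> \<in> E" "Imp \<phi> \<chi> \<in> E" for \<phi> \<chi>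
    proof -
      obtain \<theta>1 \<theta>2 where "\<theta>1 \<in> \<Theta>" "\<theta>2 \<in> \<Theta>"
        and "Imp (Dia \<theta>1) \<phi> \<in> \<Gamma>" "Imp (Dia \<theta>2) (Imp \<phi> \<chi>) \<in> \<Gamma>"
        using E unfolding E_def by blast
      moreover have "Imp (Dia (And \<theta>1 \<theta>2)) (Dia \<theta>1) \<in> \<Gamma>" "Imp (Dia (And \<theta>1 \<theta>2)) (Dia \<theta>2) \<in> \<Gamma>"
        using theory_theorem[OF \<Gamma>'] deriv_dia_mono ax_conjunct1 ax_conjunct2 by blast+
      ultimately have "Imp (Dia (And \<theta>1 \<theta>2)) \<chi> \<in> \<Gamma>"
        by (blast intro: theory_imp_mp[OF \<Gamma>'] theory_imp_trans[OF \<Gamma>'])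
      moreover have "And \<theta>1 \<theta>2 \<in> \<Theta>" using \<open>\<theta>1 \<in> \<Theta>\<close> \<open>\<theta>2 \<in> \<Theta>\<close> theory_And[OF \<Theta>'] by blast
      ultimately show ?thesis unfolding E_def by blast
    qed
  qed
  have "\<not> deriv L (\<Gamma> \<union> Dia ` \<Theta>) (Box \<chi>)" if "\<chi> \<notin> \<Theta>" for \<chi>
  proof
    assume "deriv L (\<Gamma> \<union> Dia ` \<Theta>) (Box \<chi>)"
    then obtain \<theta> where "\<theta> \<in> \<Theta>" "Imp (Dia \<theta>) (Box \<chi>) \<in> \<Gamma>"
      using in_E unfolding E_def by blast
    moreover have "deriv L {} (Imp (Imp (Dia \<theta>) (Box \<chi>)) (Box (Imp \<theta> \<chi>)))"
      using IDB by (intro deriv.extra) auto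
    ultimately have "Imp \<theta> \<chi> \<in> \<Theta>"
      using theory_theorem_mp[OF \<Gamma>'] unbox unfolding unbox_def by blast
    then show False using theory_mp[OF \<Theta>'] \<open>\<theta> \<in> \<Theta>\<close> that by blast
  qed
  moreover have "imp_directed L (Box ` (- \<Theta>))"
    unfolding imp_directed_def
  proof (intro ballI)
    fix \<phi> \<psi> assume "\<phi> \<in> Box ` (- \<Theta>)" "\<psi> \<in> Box ` (- \<Theta>)"
    then obtain \<chi>1 \<chi>2 where "\<phi> = Box \<chi>1" "\<psi> = Box \<chi>2" "\<chi>1 \<notin> \<Theta>" "\<chi>2 \<notin> \<Theta>" by blast
    moreover have "Or \<chi>1 \<chi>2 \<notin> \<Theta>" using calculation(3,4) prime_theory_Or[OF \<Theta>] by blast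
    ultimately show "\<exists>\<chi>\<in>Box ` (- \<Theta>). deriv L {} (Imp \<phi> \<chi>) \<and> deriv L {} (Imp \<psi> \<chi>)"
      using deriv_box_mono[OF ax_disjI1] deriv_box_mono[OF ax_disjI2] by blast
  qed
  ultimately obtain \<Gamma>' where "prime_theory L \<Gamma>'" "\<Gamma> \<union> Dia ` \<Theta> \<subseteq> \<Gamma>'" "\<Gamma>' \<inter> Box ` (- \<Theta>) = {}"
    using lindenbaum[of "Box ` (- \<Theta>)" L "\<Gamma> \<union> Dia ` \<Theta>"] by blast
  then show ?thesis unfolding unbox_def by blast
qed

lemma canon_I_suff:
  assumes IDB: "IDB \<in> L"
  shows "I_suff (canon_W L) canon_e (canon_le L) (canon_R L)"
  unfolding I_suff_def
proof (intro ballI impI)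
  fix w v z assume w: "w \<in> canon_W L" and v: "v \<in> canon_W L" and z: "z \<in> canon_W L"
    and wvz: "canon_R L w v \<and> canon_le L v z"
  show "\<exists>u\<in>canon_W L. canon_le L w u \<and> canon_R L u z \<and>
          (\<forall>s\<in>canon_W L. canon_le L u s \<longrightarrow> (\<exists>t\<in>canon_W L. canon_R L s t \<and> canon_le L z t))"
  proof (cases "z = canon_e")
    case True
    have e: "canon_e \<in> canon_W L" by (rule canon_e_in_canon_W)
    have "canon_le L w canon_e" "canon_le L canon_e canon_e"
      using w e unfolding canon_le_def canon_e_def by auto
    then show ?thesis
      using True e canon_le_from_canon_e canon_R_from_canon_e[OF e] by blast
  next
    case False
    have Bot: "Bot \<notin> fst z" using False canon_W_eq_canon_e[OF z] by blast
    have "unbox (fst w) \<subseteq> fst z" using wvz unfolding canon_R_def canon_le_def successors_def by auto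
    then obtain \<Gamma>' where \<Gamma>': "prime_theory L \<Gamma>'" "fst w \<subseteq> \<Gamma>'" "\<forall>\<theta>\<in>fst z. Dia \<theta> \<in> \<Gamma>'"
      "unbox \<Gamma>' \<subseteq> fst z"
      using IDB_prime_extension[OF IDB canon_W_prime_theory[OF w] canon_W_prime_theory[OF z]] by blast
    let ?u = "plain_world \<Gamma>'"
    have u: "?u \<in> canon_W L" using plain_world_in_canon_W[OF \<Gamma>'(1)] .
    have "canon_le L w ?u" using w u \<Gamma>'(2) unfolding canon_le_def by simp
    moreover have "canon_R L ?u z"
      using u z \<Gamma>'(4) canon_W_prime_theory[OF z] Bot
      unfolding canon_R_def successors_def plain_world_def by auto
    moreover have "\<exists>t\<in>canon_W L. canon_R L s t \<and> canon_le L z t" if s: "canon_le L ?u s" for s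
    proof -
      have "\<forall>\<theta>\<in>fst z. Dia \<theta> \<in> fst s" using \<Gamma>'(3) canon_le_mono[OF s] by simp
      then obtain t where "canon_R L s t" "fst z \<subseteq> fst t"
        using canon_successor_containing[OF canon_le_in_canon_W[OF s] canon_W_prime_theory[OF z]]
        by blast
      then show ?thesis using z canon_R_in_canon_W unfolding canon_le_def by blast
    qed
    ultimately show ?thesis using u by blast
  qed
qed

section \<open>Moving a model along an injection\<close>

definition image_rel :: "('a \<Rightarrow> 'b) \<Rightarrow> 'a set \<Rightarrow> ('a \<Rightarrow> 'a \<Rightarrow> bool) \<Rightarrow> 'b \<Rightarrow> 'b \<Rightarrow> bool" where
  "image_rel f X r a b \<longleftrightarrow> (\<exists>x\<in>X. \<exists>y\<in>X. a = f x \<and> b = f y \<and> r x y)"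

context
  fixes f :: "'a \<Rightarrow> 'b" and X :: "'a set"
  assumes inj: "inj_on f X"
begin

lemma image_rel_image: "x \<in> X \<Longrightarrow> y \<in> X \<Longrightarrow> image_rel f X r (f x) (f y) \<longleftrightarrow> r x y"
  using inj unfolding image_rel_def inj_on_def by auto

lemma image_rel_in_image: "image_rel f X r a b \<Longrightarrow> a \<in> f ` X \<and> b \<in> f ` X"
  unfolding image_rel_def by auto

lemma ck_frame_image:
  assumes "ck_frame X e le R"
  shows "ck_frame (f ` X) (f e) (image_rel f X le) (image_rel f X R)"
proof -
  note D = ck_frameD[OF assms]
  have "image_rel f X le a c" if "image_rel f X le a b" "image_rel f X le b c" for a b c
    using that D(1,4) image_rel_image unfolding image_rel_def by (metis inj_on_eq_iff[OF inj])
  then show ?thesis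
    unfolding ck_frame_def Ball_image_comp comp_def
    using D image_rel_in_image image_rel_image inj_on_eq_iff[OF inj] by auto
qed

lemma valuation_image:
  assumes "valuation X e le V"
  shows "valuation (f ` X) (f e) (image_rel f X le) (\<lambda>p. f ` V p)"
  using assms inj unfolding valuation_def image_rel_def inj_on_def by (auto 0 4)

lemma forces_image:
  assumes "ck_frame X e le R" "valuation X e le V" "x \<in> X"
  shows "forces (f ` X) (f e) (image_rel f X le) (image_rel f X R) (\<lambda>p. f ` V p) (f x) \<phi>
    \<longleftrightarrow> forces X e le R V x \<phi>"
  using assms(3)
proof (induction \<phi> arbitrary: x)
  case (Var p)
  have "V p \<subseteq> X" using assms(2) unfolding valuation_def by blast
  then show ?case using Var inj_on_eq_iff[OF inj] by auto
next
  case Bot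
  then show ?case using ck_frameD(5)[OF assms(1)] inj_on_eq_iff[OF inj] by auto
qed (simp_all add: Ball_image_comp image_rel_image)

lemma in_class_image:
  assumes "in_class nc Ax X e le R"
  shows "in_class nc Ax (f ` X) (f e) (image_rel f X le) (image_rel f X R)"
proof -
  have ck: "ck_frame X e le R" using assms unfolding in_class_def by simp
  note simps = Ball_image_comp comp_def image_rel_image inj_on_eq_iff[OF inj] ck_frameD(5)[OF ck]
  have "N_corr (f ` X) (f e) (image_rel f X le) (image_rel f X R)" if "N_corr X e le R"
    using that unfolding N_corr_def by (simp add: simps)
  moreover have "N_suff (f ` X) (f e) (image_rel f X le) (image_rel f X R)" if "N_suff X e le R"
    using that unfolding N_suff_def by (simp add: simps)
  moreover have "C_suff (f ` X) (f e) (image_rel f X le) (image_rel f X R)" if "C_suff X e le R"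
    using that unfolding C_suff_def by (simp add: simps)
  moreover have "I_suff (f ` X) (f e) (image_rel f X le) (image_rel f X R)" if "I_suff X e le R"
    using that unfolding I_suff_def by (simp add: simps)
  ultimately show ?thesis
    using assms ck_frame_image[OF ck] unfolding in_class_def by (auto split: ncond.splits)
qed

end

lemma conseq_on_injective_model:
  fixes f :: "'a \<Rightarrow> 'b"
  assumes "conseq TYPE('b) nc Ax \<Gamma> \<phi>" and inj: "inj_on f X"
    and cls: "in_class nc Ax X e le R" and val: "valuation X e le V"
    and "x \<in> X" "\<forall>\<psi>\<in>\<Gamma>. forces X e le R V x \<psi>"
  shows "forces X e le R V x \<phi>"
proof -
  have ck: "ck_frame X e le R" using cls unfolding in_class_def by simp
  note transfer = forces_image[OF inj ck val]
  show ?thesis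
    using assms(1,5,6) in_class_image[OF inj cls] valuation_image[OF inj val] transfer
    unfolding conseq_def by (metis imageI)
qed

definition pair_code :: "fm set \<times> fm set \<Rightarrow> fm set" where
  "pair_code w = (\<lambda>\<phi>. And \<phi> Bot) ` fst w \<union> (\<lambda>\<phi>. Or \<phi> Bot) ` snd w"

lemma inj_pair_code: "inj pair_code"
proof (rule injI)
  fix w v assume "pair_code w = pair_code v"
  moreover have "fst u = {\<phi>. And \<phi> Bot \<in> pair_code u}" "snd u = {\<phi>. Or \<phi> Bot \<in> pair_code u}" for u
    unfolding pair_code_def by auto
  ultimately show "w = v" by (metis prod.expand)
qed

lemma in_class_canon:
  assumes "NDB \<in> L" "Ax \<subseteq> L"
  shows "in_class nc Ax (canon_W L) canon_e (canon_le L) (canon_R L)"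
  using assms ck_frame_canon canon_N_corr canon_N_suff canon_C_suff canon_I_suff
  unfolding in_class_def by (auto split: ncond.split)

lemma strong_completeness:
  assumes "conseq TYPE(fm set) nc Ax \<Gamma> \<phi>"
  shows "deriv (insert NDB Ax) \<Gamma> \<phi>"
proof (rule ccontr)
  let ?L = "insert NDB Ax"
  assume "\<not> deriv ?L \<Gamma> \<phi>"
  then obtain \<Delta> where \<Delta>: "prime_theory ?L \<Delta>" "\<Gamma> \<subseteq> \<Delta>" "\<phi> \<notin> \<Delta>"
    using lindenbaum_single by blast
  have w: "plain_world \<Delta> \<in> canon_W ?L" using plain_world_in_canon_W[OF \<Delta>(1)] .
  have "canon_forces ?L (plain_world \<Delta>) \<phi>"
  proof (rule conseq_on_injective_model[OF assms inj_on_subset[OF inj_pair_code subset_UNIV]])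
    show "in_class nc Ax (canon_W ?L) canon_e (canon_le ?L) (canon_R ?L)"
      by (rule in_class_canon) auto
    show "\<forall>\<psi>\<in>\<Gamma>. canon_forces ?L (plain_world \<Delta>) \<psi>"
      using canon_truth[OF w] \<Delta>(2) by auto
  qed (fact valuation_canon w)+
  then show False using canon_truth[OF w] \<Delta>(3) by simp
qed

theorem mainTheorem15:
  fixes Ax :: "ax set"
  assumes "Ax \<subseteq> {CD, IDB}"
  shows "sound_strongly_complete TYPE('w) (insert NDB Ax) Ncorr Ax
         \<and> (IDB \<in> Ax \<longrightarrow> sound_strongly_complete TYPE('w) (insert NDB Ax) Nsuff Ax)"
  unfolding sound_strongly_complete_def using soundness strong_completeness by blast

end
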